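(* Let $p,k\ge 0$ be integers and $n\ge (p+1)k$. For every $\alpha\in C_n(p,k)$ with $\alpha\ne\gamma_{n,k}$, the list $\mathcal{D}_p(\alpha)$ ends with $\gamma_{n,k}=0^{n-k}1^k$.
   Context: The weight of a binary word is its number of 1's. For integers $p,k\ge 0$ and $n\ge (p+1)k$, $C_n(p,k)$ is the set of binary words of length $n$ and weight $k$ such that every prefix contains at least $p$ times as many 0's as 1's (i.e. in every prefix, #0's $\ge p\cdot$ #1's). $\gamma_{n,k}=0^{n-k}1^k$. A homogeneous transposition of a binary word exchanges a 1 and a 0 such that no 1 occurs strictly between the two exchanged positions. For a set $S$ of binary words of the same length and weight and $\alpha\in S$, the list obtained by applying the greedy algorithm for $S$ to $\alpha$ is built as follows: start with the list $(\alpha)$; repeatedly, for the last word $w$ of the current list, among all words obtainable from $w$ by one homogeneous transposition that lie in $S$ and do not already occur in the list, choose the one obtained by transposing the leftmost possible 1 with (among transpositions of that 1) the leftmost possible 0, and append it; stop when no such word exists. $\mathcal{D}_p(\alpha)$ denotes the list obtained by applying the greedy algorithm for $C_n(p,k)$ to $\alpha\in C_n(p,k)$. *)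

theory Defs
  imports Main
begin

text \<open>Binary words are bool lists; True encodes the letter 1, False the letter 0.\<close>

definition weight :: "bool list \<Rightarrow> nat" where
  "weight w = count_list w True"

definition zeros :: "bool list \<Rightarrow> nat" where
  "zeros w = count_list w False"

definition Cnpk :: "nat \<Rightarrow> nat \<Rightarrow> nat \<Rightarrow> bool list set" where
  "Cnpk n p k = {w. length w = n \<and> weight w = k \<and>
      (\<forall>i \<le> length w. zeros (take i w) \<ge> p * weight (take i w))}"

definition gamma :: "nat \<Rightarrow> nat \<Rightarrow> bool list" where
  "gamma n k = replicate (n - k) False @ replicate k True"

definition swap :: "bool list \<Rightarrow> nat \<Rightarrow> nat \<Rightarrow> bool list" where
  "swap w i j = w[i := w ! j, j := w ! i]"

definition homog :: "bool list \<Rightarrow> nat \<Rightarrow> nat \<Rightarrow> bool" where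
  "homog w i j \<longleftrightarrow> i < length w \<and> j < length w \<and> w ! i \<and> \<not> w ! j \<and>
      (\<forall>m. min i j < m \<and> m < max i j \<longrightarrow> \<not> w ! m)"

definition cands :: "bool list set \<Rightarrow> bool list list \<Rightarrow> bool list \<Rightarrow> (nat \<times> nat) set" where
  "cands S L w = {(i, j). homog w i j \<and> swap w i j \<in> S \<and> swap w i j \<notin> set L}"

definition greedy_step :: "bool list set \<Rightarrow> bool list list \<Rightarrow> bool list list" where
  "greedy_step S L =
     (let w = last L; C = cands S L w in
      if C = {} then L
      else (let i0 = (LEAST i. \<exists>j. (i, j) \<in> C);
                j0 = (LEAST j. (i0, j) \<in> C)
            in L @ [swap w i0 j0]))"

text \<open>The greedy list: each step appends a new word of the finite set S, so
  after card S steps the process has stopped.\<close>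
definition greedy :: "bool list set \<Rightarrow> bool list \<Rightarrow> bool list list" where
  "greedy S \<alpha> = (greedy_step S ^^ card S) [\<alpha>]"

definition Dp :: "nat \<Rightarrow> nat \<Rightarrow> nat \<Rightarrow> bool list \<Rightarrow> bool list list" where
  "Dp n p k \<alpha> = greedy (Cnpk n p k) \<alpha>"

end

theory Submission
  imports Defs
begin

text \<open>Moving a 1 to the right never increases the weight of a prefix, so it keeps a word
  in \<open>C\<^sub>n(p,k)\<close>. If the last word \<open>w\<close> of the greedy list is not \<open>\<gamma>\<close>, it has a 1 before
  its last 0, and moving the rightmost such 1 into the last 0 is a homogeneous transposition
  producing a word with more trailing 1's than any word of the list; so the greedy step is
  possible. The greedy choice moves a 1 no further right than this one, hence only touches
  letters before the last 0, so the last word always has the longest block of trailing 1's in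
  the list. The list therefore grows until it reaches \<open>\<gamma>\<close>, which must happen within
  \<open>|C\<^sub>n(p,k)|\<close> steps. Once \<open>\<gamma>\<close> is appended the process stops: a homogeneous transposition
  of \<open>\<gamma>\<close> moves its first 1 to some 0 on the left; moving it to where the last step took a 1
  from gives back the previous word, and moving it anywhere else gives a word that the previous
  step could have reached with a more leftward 0.\<close>

lemma count_list_update:
  "i < length xs \<Longrightarrow>
    count_list (xs[i := y]) x + (if xs ! i = x then 1 else 0)
      = count_list xs x + (if y = x then 1 else 0)"
proof (induction xs arbitrary: i)
  case (Cons a xs)
  show ?case
  proof (cases i)
    case (Suc j)
    then show ?thesis using Cons.IH[of j] Cons.prems by auto
  qed auto
qed simp

lemma zeros_eq_length_minus_weight: "zeros w = length w - weight w"
proof -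
  have "count_list w False + count_list w True = length w"
    by (induction w) auto
  then show ?thesis unfolding zeros_def weight_def by simp
qed

lemma weight_take_move_one_right:
  assumes "i < j" "j < length w" "w ! i" "\<not> w ! j"
  shows "weight (take l (w[i := False, j := True])) + (if i < l \<and> l \<le> j then 1 else 0)
    = weight (take l w)"
  using count_list_update[of i "take l w" False True]
    count_list_update[of j "(take l w)[i := False]" True True] assms
  by (auto simp: weight_def take_update_swap list_update_beyond)

lemma sorted_bool_list_eq:
  "sorted (w :: bool list) \<Longrightarrow>
    w = replicate (count_list w False) False @ replicate (count_list w True) True"
  by (induction w) auto

lemma swap_one_zero: "w ! i \<Longrightarrow> \<not> w ! j \<Longrightarrow> swap w i j = w[i := False, j := True]"
  unfolding swap_def by simp

lemma swap_swap: "i < length w \<Longrightarrow> j < length w \<Longrightarrow> swap (swap w i j) i j = w"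
  unfolding swap_def by (auto intro!: nth_equalityI simp: nth_list_update split: if_splits)

lemma homog_swap: "homog w i j \<Longrightarrow> homog (swap w i j) j i"
  unfolding homog_def swap_def by (auto simp: nth_list_update min.commute max.commute)

lemma swap_right_in_Cnpk:
  assumes "w \<in> Cnpk n p k" "i < j" "j < length w" "w ! i" "\<not> w ! j"
  shows "swap w i j \<in> Cnpk n p k"
proof -
  let ?v = "w[i := False, j := True]"
  have prefix: "weight (take l ?v) \<le> weight (take l w)" for l
    using weight_take_move_one_right[OF assms(2-5), of l] by linarith
  have "weight ?v = weight w"
    using weight_take_move_one_right[OF assms(2-5), of "length w"] assms(3) by simp
  moreover have "p * weight (take l ?v) \<le> zeros (take l ?v)" if "l \<le> length ?v" for l
  proof -
    have "p * weight (take l w) \<le> zeros (take l w)"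
      using assms(1) that unfolding Cnpk_def by auto
    moreover have "zeros (take l w) \<le> zeros (take l ?v)"
      using prefix[of l] by (simp add: zeros_eq_length_minus_weight)
    ultimately show ?thesis using mult_le_mono2[OF prefix[of l], of p] by linarith
  qed
  ultimately show ?thesis
    using assms(1) swap_one_zero[OF assms(4,5)] unfolding Cnpk_def by auto
qed

lemma nth_gamma: "q < n \<Longrightarrow> gamma n k ! q = (n - k \<le> q)"
  unfolding gamma_def by (simp add: nth_append)

lemma length_gamma: "k \<le> n \<Longrightarrow> length (gamma n k) = n"
  unfolding gamma_def by simp

lemma Cnpk_not_gamma_inversion:
  assumes "w \<in> Cnpk n p k" "w \<noteq> gamma n k"
  obtains i j where "i < j" "j < length w" "w ! i" "\<not> w ! j"
proof -
  have "\<not> sorted w"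
  proof
    assume "sorted w"
    moreover have "length w = n" "count_list w True = k" "count_list w False = n - k"
      using assms(1) zeros_eq_length_minus_weight[of w]
      unfolding Cnpk_def weight_def zeros_def by auto
    ultimately have "w = gamma n k"
      using sorted_bool_list_eq[of w] unfolding gamma_def by simp
    with assms(2) show False ..
  qed
  then show thesis using that by (auto simp: sorted_iff_nth_mono_less)
qed

lemma homog_gamma:
  assumes "k \<le> n" "homog (gamma n k) i j"
  shows "i = n - k" "j < n - k"
proof -
  have ij: "i < n" "j < n" "gamma n k ! i" "\<not> gamma n k ! j"
    and between: "\<And>m. min i j < m \<Longrightarrow> m < max i j \<Longrightarrow> \<not> gamma n k ! m"
    using assms unfolding homog_def by (auto simp: length_gamma)
  then show "j < n - k" by (simp add: nth_gamma)
  with ij between[of "n - k"] show "i = n - k" by (force simp: nth_gamma)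
qed

lemma cands_empty_after_reaching_gamma:
  assumes "k \<le> n" "L \<noteq> []" "length (last L) = n"
    and chosen: "(i0, j0) \<in> cands S L (last L)"
    and least: "\<And>j. (i0, j) \<in> cands S L (last L) \<Longrightarrow> j0 \<le> j"
    and reached: "swap (last L) i0 j0 = gamma n k"
  shows "cands S (L @ [gamma n k]) (gamma n k) = {}"
proof (rule ccontr)
  let ?w = "last L" and ?g = "gamma n k"
  have "homog ?w i0 j0" using chosen unfolding cands_def by simp
  then have "homog ?g j0 i0" using homog_swap reached by metis
  then have j0: "j0 = n - k" and i0: "i0 < n - k" using homog_gamma[OF \<open>k \<le> n\<close>] by auto
  have "j0 < n" "?w = swap ?g i0 j0"
    using swap_swap[of i0 ?w j0] reached \<open>homog ?w i0 j0\<close> assms(3) unfolding homog_def by auto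
  then have w: "?w = ?g[i0 := True, j0 := False]"
    using i0 j0 unfolding swap_def by (simp add: nth_gamma)
  assume "cands S (L @ [?g]) ?g \<noteq> {}"
  then obtain i j where "homog ?g i j" and new: "swap ?g i j \<in> S" "swap ?g i j \<notin> set L"
    unfolding cands_def by auto
  then have i: "i = n - k" and j: "j < n - k" using homog_gamma[OF \<open>k \<le> n\<close>] by auto
  have g_ij: "swap ?g i j = ?g[j0 := False, j := True]"
    using i j j0 \<open>j0 < n\<close> unfolding swap_def by (simp add: nth_gamma)
  show False
  proof (cases "j = i0")
    case True
    then have "swap ?g i j = ?w" using g_ij w j0 i0 by (simp add: list_update_swap)
    then show False using new \<open>L \<noteq> []\<close> by simp
  next
    case False
    have "?w ! i0" "\<not> ?w ! j"
      using w False i0 j j0 \<open>j0 < n\<close> assms(1) by (simp_all add: length_gamma nth_gamma)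
    then have "swap ?w i0 j = ?g[i0 := True, j0 := False, i0 := False, j := True]"
      by (simp add: swap_one_zero w)
    also have "\<dots> = swap ?g i j"
      using i0 j j0 \<open>j0 < n\<close> assms(1)
      by (intro nth_equalityI) (simp_all add: g_ij nth_list_update length_gamma nth_gamma)
    finally have "swap ?w i0 j = swap ?g i j" .
    moreover have "homog ?w i0 j"
      using False i0 j j0 assms(1)
      by (auto simp: homog_def w nth_list_update length_gamma nth_gamma)
    ultimately have "(i0, j) \<in> cands S L ?w" using new unfolding cands_def by simp
    then show False using least j j0 by fastforce
  qed
qed

definition ends_with_ones :: "nat \<Rightarrow> bool list \<Rightarrow> bool" where
  "ends_with_ones m v \<longleftrightarrow> m \<le> length v \<and> (\<forall>q. length v - m \<le> q \<longrightarrow> q < length v \<longrightarrow> v ! q)"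

definition last_has_most_trailing_ones :: "bool list list \<Rightarrow> bool" where
  "last_has_most_trailing_ones L \<longleftrightarrow>
    (\<forall>v \<in> set L. \<forall>m. ends_with_ones m v \<longrightarrow> ends_with_ones m (last L))"

lemma ends_with_ones_zero_before:
  "ends_with_ones m w \<Longrightarrow> z < length w \<Longrightarrow> \<not> w ! z \<Longrightarrow> z < length w - m"
  unfolding ends_with_ones_def by (meson not_le)

lemma ends_with_ones_swap:
  assumes "ends_with_ones m w" "i < length w - m" "j < length w - m"
  shows "ends_with_ones m (swap w i j)"
  using assms unfolding ends_with_ones_def swap_def by auto

lemma inversion_last_zero:
  assumes "i < j" "j < length w" "w ! i" "\<not> w ! j"
  obtains \<rho> z where "homog w \<rho> z" "\<rho> < z" "\<And>q. z < q \<Longrightarrow> q < length w \<Longrightarrow> w ! q"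
proof -
  define z where "z = (GREATEST q. q < length w \<and> \<not> w ! q)"
  have z: "z < length w" "\<not> w ! z" "j \<le> z"
    and z_last: "\<And>q. z < q \<Longrightarrow> q < length w \<Longrightarrow> w ! q"
    unfolding z_def using assms Greatest_le_nat[of "\<lambda>q. q < length w \<and> \<not> w ! q" _ "length w"]
      GreatestI_nat[of "\<lambda>q. q < length w \<and> \<not> w ! q" j "length w"] by force+
  define \<rho> where "\<rho> = (GREATEST q. q < z \<and> w ! q)"
  have \<rho>: "\<rho> < z" "w ! \<rho>" and \<rho>_last: "\<And>q. \<rho> < q \<Longrightarrow> q < z \<Longrightarrow> \<not> w ! q"
    unfolding \<rho>_def using assms z Greatest_le_nat[of "\<lambda>q. q < z \<and> w ! q" _ z]
      GreatestI_nat[of "\<lambda>q. q < z \<and> w ! q" i z] by force+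
  have "homog w \<rho> z" unfolding homog_def using \<rho> \<rho>_last z by auto
  then show thesis using that \<rho>(1) z_last by blast
qed

lemma greedy_step_stuck: "cands S L (last L) = {} \<Longrightarrow> greedy_step S L = L"
  unfolding greedy_step_def Let_def by simp

lemma greedy_step_choice:
  assumes "cands S L (last L) \<noteq> {}"
  obtains i0 j0 where "greedy_step S L = L @ [swap (last L) i0 j0]"
    "(i0, j0) \<in> cands S L (last L)"
    "\<And>i j. (i, j) \<in> cands S L (last L) \<Longrightarrow> i0 \<le> i"
    "\<And>j. (i0, j) \<in> cands S L (last L) \<Longrightarrow> j0 \<le> j"
proof -
  let ?C = "cands S L (last L)"
  define i0 where "i0 = (LEAST i. \<exists>j. (i, j) \<in> ?C)"
  define j0 where "j0 = (LEAST j. (i0, j) \<in> ?C)"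
  have "\<exists>j. (i0, j) \<in> ?C"
    unfolding i0_def by (rule LeastI_ex) (use assms in auto)
  then have "(i0, j0) \<in> ?C" unfolding j0_def by (rule LeastI_ex)
  moreover have "greedy_step S L = L @ [swap (last L) i0 j0]"
    using assms unfolding greedy_step_def Let_def i0_def j0_def by simp
  moreover have "i0 \<le> i" if "(i, j) \<in> ?C" for i j
    unfolding i0_def using that by (blast intro: Least_le)
  moreover have "j0 \<le> j" if "(i0, j) \<in> ?C" for j
    unfolding j0_def using that by (rule Least_le)
  ultimately show thesis using that by blast
qed

lemma move_to_last_zero_is_candidate:
  assumes "L \<noteq> []" "set L \<subseteq> Cnpk n p k" "last L \<noteq> gamma n k"
    and most: "last_has_most_trailing_ones L"
  obtains \<rho> z where "(\<rho>, z) \<in> cands (Cnpk n p k) L (last L)" "\<rho> < z"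
    "z < length (last L)" "\<And>q. z < q \<Longrightarrow> q < length (last L) \<Longrightarrow> last L ! q"
proof -
  let ?w = "last L"
  have w: "?w \<in> Cnpk n p k" using assms(1,2) by auto
  obtain i j where "i < j" "j < length ?w" "?w ! i" "\<not> ?w ! j"
    using Cnpk_not_gamma_inversion[OF w assms(3)] .
  then obtain \<rho> z where "homog ?w \<rho> z" "\<rho> < z"
    and z_last: "\<And>q. z < q \<Longrightarrow> q < length ?w \<Longrightarrow> ?w ! q"
    using inversion_last_zero by blast
  then have \<rho>z: "z < length ?w" "?w ! \<rho>" "\<not> ?w ! z" unfolding homog_def by auto
  have "ends_with_ones (length ?w - z) (swap ?w \<rho> z)"
    using \<rho>z \<open>\<rho> < z\<close> z_last unfolding ends_with_ones_def swap_def
    by (auto simp: nth_list_update)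
  moreover have "\<not> ends_with_ones (length ?w - z) ?w"
    using ends_with_ones_zero_before[of "length ?w - z" ?w z] \<rho>z by auto
  ultimately have "swap ?w \<rho> z \<notin> set L"
    using most unfolding last_has_most_trailing_ones_def by blast
  moreover have "swap ?w \<rho> z \<in> Cnpk n p k"
    using swap_right_in_Cnpk[OF w \<open>\<rho> < z\<close>] \<rho>z by simp
  ultimately have "(\<rho>, z) \<in> cands (Cnpk n p k) L ?w"
    using \<open>homog ?w \<rho> z\<close> unfolding cands_def by simp
  then show thesis using that \<open>\<rho> < z\<close> \<rho>z(1) z_last by blast
qed

lemma greedy_step_from_non_gamma:
  fixes L :: "bool list list"
  assumes "k \<le> n" "L \<noteq> []" "set L \<subseteq> Cnpk n p k" "last L \<noteq> gamma n k"
    and most: "last_has_most_trailing_ones L"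
  obtains w' where "greedy_step (Cnpk n p k) L = L @ [w']" "w' \<in> Cnpk n p k" "w' \<notin> set L"
    "last_has_most_trailing_ones (L @ [w'])"
    "w' = gamma n k \<Longrightarrow> cands (Cnpk n p k) (L @ [w']) w' = {}"
proof -
  let ?S = "Cnpk n p k" and ?w = "last L"
  have "?w \<in> ?S" using assms(2,3) by auto
  then have len: "length ?w = n" unfolding Cnpk_def by simp
  obtain \<rho> z where \<rho>z_cand: "(\<rho>, z) \<in> cands ?S L ?w" and "\<rho> < z" "z < n"
    and z_last: "\<And>q. z < q \<Longrightarrow> q < n \<Longrightarrow> ?w ! q"
    using move_to_last_zero_is_candidate[OF assms(2-4) most] len by metis
  then have "\<not> ?w ! z" unfolding cands_def homog_def by simp
  obtain i0 j0 where step: "greedy_step ?S L = L @ [swap ?w i0 j0]"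
    and chosen: "(i0, j0) \<in> cands ?S L ?w"
    and least_i: "\<And>i j. (i, j) \<in> cands ?S L ?w \<Longrightarrow> i0 \<le> i"
    and least_j: "\<And>j. (i0, j) \<in> cands ?S L ?w \<Longrightarrow> j0 \<le> j"
    using greedy_step_choice \<rho>z_cand by blast
  have "i0 \<le> \<rho>" using least_i \<rho>z_cand .
  moreover have "j0 \<le> z"
  proof -
    have "j0 < n" "\<not> ?w ! j0" using chosen len unfolding cands_def homog_def by auto
    then show ?thesis using z_last by (meson not_le)
  qed
  ultimately have "ends_with_ones m (swap ?w i0 j0)" if "ends_with_ones m ?w" for m
    using ends_with_ones_zero_before[OF that, of z] \<open>\<not> ?w ! z\<close> \<open>\<rho> < z\<close> \<open>z < n\<close> len
    by (intro ends_with_ones_swap[OF that]) auto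
  then have "last_has_most_trailing_ones (L @ [swap ?w i0 j0])"
    using most unfolding last_has_most_trailing_ones_def by auto
  moreover have "swap ?w i0 j0 = gamma n k \<Longrightarrow>
      cands ?S (L @ [swap ?w i0 j0]) (swap ?w i0 j0) = {}"
    using cands_empty_after_reaching_gamma[OF assms(1,2) len chosen least_j] by simp
  moreover have "swap ?w i0 j0 \<in> ?S" "swap ?w i0 j0 \<notin> set L"
    using chosen unfolding cands_def by auto
  ultimately show thesis using that step by blast
qed

lemma finite_Cnpk: "finite (Cnpk n p k)"
proof (rule finite_subset)
  show "Cnpk n p k \<subseteq> {w. set w \<subseteq> UNIV \<and> length w = n}" unfolding Cnpk_def by auto
  show "finite {w :: bool list. set w \<subseteq> UNIV \<and> length w = n}"
    by (rule finite_lists_length_eq) simp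
qed

lemma greedy_iterate_invariant:
  assumes "k \<le> n" "\<alpha> \<in> Cnpk n p k" "\<alpha> \<noteq> gamma n k"
    and "L = (greedy_step (Cnpk n p k) ^^ m) [\<alpha>]"
  shows "L \<noteq> [] \<and> distinct L \<and> set L \<subseteq> Cnpk n p k \<and>
    (last L = gamma n k \<and> cands (Cnpk n p k) L (last L) = {} \<or>
     last L \<noteq> gamma n k \<and> last_has_most_trailing_ones L \<and> length L = Suc m)"
  using assms(4)
proof (induction m arbitrary: L)
  case 0
  then show ?case using assms(2,3) unfolding last_has_most_trailing_ones_def by simp
next
  case (Suc m)
  let ?S = "Cnpk n p k" and ?L = "(greedy_step (Cnpk n p k) ^^ m) [\<alpha>]"
  have L: "L = greedy_step ?S ?L" using Suc.prems by simp
  note IH = Suc.IH[OF refl]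
  show ?case
  proof (cases "last ?L = gamma n k \<and> cands ?S ?L (last ?L) = {}")
    case True
    then show ?thesis using IH L greedy_step_stuck[of ?S ?L] by simp
  next
    case False
    then have "last ?L \<noteq> gamma n k" "last_has_most_trailing_ones ?L" "length ?L = Suc m"
      using IH by auto
    then obtain w' where "L = ?L @ [w']" "w' \<in> ?S" "w' \<notin> set ?L"
      "last_has_most_trailing_ones (?L @ [w'])"
      "w' = gamma n k \<Longrightarrow> cands ?S (?L @ [w']) w' = {}"
      using greedy_step_from_non_gamma[OF assms(1)] IH L by metis
    then show ?thesis using IH \<open>length ?L = Suc m\<close> by auto
  qed
qed

theorem lemma3:
  fixes n p k :: nat and \<alpha> :: "bool list"
  assumes "n \<ge> (p + 1) * k"
    and "\<alpha> \<in> Cnpk n p k"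
    and "\<alpha> \<noteq> gamma n k"
  shows "last (Dp n p k \<alpha>) = gamma n k"
proof -
  let ?S = "Cnpk n p k"
  define L where "L = (greedy_step ?S ^^ card ?S) [\<alpha>]"
  have "k \<le> n" using assms(1) by simp
  then have L: "L \<noteq> [] \<and> distinct L \<and> set L \<subseteq> ?S \<and>
      (last L = gamma n k \<and> cands ?S L (last L) = {} \<or>
       last L \<noteq> gamma n k \<and> last_has_most_trailing_ones L \<and> length L = Suc (card ?S))"
    using greedy_iterate_invariant[OF _ assms(2,3) L_def] by blast
  have "length L \<le> card ?S"
    using L distinct_card[of L] card_mono[OF finite_Cnpk, of "set L"] by simp
  then have "last L = gamma n k" using L by auto
  then show ?thesis unfolding Dp_def greedy_def L_def .
qed

end
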